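(* Let $(Z,\tau)$ be a topological space with a countable basis of open sets. For every $R>0$ let $f_R,\,g_R:Z\to\mathbb{R}$ be upper semicontinuous functions such that $$f_R\le g_R\le f_{R+\epsilon}\quad\text{on } Z\qquad\text{for all } R>0,\ \epsilon>0.$$ Then the set of $R>0$ for which $f_R\not\equiv g_R$ on $Z$ is at most countable. *)

theory Defs
  imports "HOL-Analysis.Analysis"
begin

definition upper_semicontinuous_on_top :: "'a topology \<Rightarrow> ('a \<Rightarrow> real) \<Rightarrow> bool" where
  "upper_semicontinuous_on_top X f \<longleftrightarrow> (\<forall>a. openin X {x \<in> topspace X. f x < a})"

end

theory Submission
  imports Defs
begin

text \<open>Whenever \<open>f\<^sub>R z < g\<^sub>R z\<close>, upper semicontinuity of \<open>f\<^sub>R\<close> yields a basic open set \<open>V\<close>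
  and a rational \<open>q\<close> with \<open>f\<^sub>R < q\<close> on \<open>V\<close> but \<open>q < g\<^sub>R\<close> somewhere on \<open>V\<close>. Such a pair
  \<open>(V, q)\<close> cannot serve two parameters \<open>R < R'\<close>, because \<open>g\<^sub>R \<le> f\<^sub>R\<^sub>'\<close>; so the
  exceptional parameters inject into the countable set of pairs.\<close>

definition rat_gap_witness ::
    "'a topology \<Rightarrow> 'a set set \<Rightarrow> ('a \<Rightarrow> real) \<Rightarrow> ('a \<Rightarrow> real) \<Rightarrow> 'a set \<times> rat \<Rightarrow> bool" where
  "rat_gap_witness X B f g p \<longleftrightarrow>
     fst p \<in> B \<and> (\<exists>z \<in> fst p. of_rat (snd p) < g z)
     \<and> fst p \<subseteq> {x \<in> topspace X. f x < of_rat (snd p)}"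

lemma countable_if_ordered_witnesses:
  fixes S :: "'a::linorder set"
  assumes "countable C"
    and "\<And>x. x \<in> S \<Longrightarrow> \<exists>c \<in> C. P x c"
    and "\<And>x y c. x \<in> S \<Longrightarrow> y \<in> S \<Longrightarrow> x < y \<Longrightarrow> P x c \<Longrightarrow> P y c \<Longrightarrow> False"
  shows "countable S"
proof -
  define w where "w x = (SOME c. c \<in> C \<and> P x c)" for x
  have w: "w x \<in> C" "P x (w x)" if "x \<in> S" for x
    using someI_ex[of "\<lambda>c. c \<in> C \<and> P x c"] assms(2)[OF that] unfolding w_def by auto
  have "inj_on w S"
  proof (rule inj_onI)
    fix x y assume "x \<in> S" "y \<in> S" "w x = w y"
    then show "x = y"
      using assms(3)[of x y "w x"] assms(3)[of y x "w x"] w by (metis linorder_neqE)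
  qed
  moreover have "countable (w ` S)"
    using assms(1) w(1) by (blast intro: countable_subset)
  ultimately show ?thesis
    by (blast intro: countable_image_inj_on)
qed

lemma rat_gap_witness_exists:
  assumes basis: "\<And>U x. openin X U \<Longrightarrow> x \<in> U \<Longrightarrow> \<exists>V \<in> B. x \<in> V \<and> V \<subseteq> U"
    and usc: "upper_semicontinuous_on_top X f"
    and z: "z \<in> topspace X" "f z < g z"
  shows "\<exists>p. rat_gap_witness X B f g p"
proof -
  obtain q where q: "f z < of_rat q" "of_rat q < g z"
    using z(2) of_rat_dense by blast
  have "openin X {x \<in> topspace X. f x < of_rat q}"
    using usc unfolding upper_semicontinuous_on_top_def by blast
  then obtain V where "V \<in> B" "z \<in> V" "V \<subseteq> {x \<in> topspace X. f x < of_rat q}"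
    using basis z(1) q(1) by blast
  with q(2) have "rat_gap_witness X B f g (V, q)"
    unfolding rat_gap_witness_def by auto
  then show ?thesis ..
qed

lemma rat_gap_witness_not_shared:
  assumes "\<And>z. z \<in> topspace X \<Longrightarrow> g z \<le> f' z"
    and "rat_gap_witness X B f g p" "rat_gap_witness X B f' g' p"
  shows False
  using assms unfolding rat_gap_witness_def by (fastforce simp: subset_eq)

theorem lemma2p1:
  fixes X :: "'a topology" and f g :: "real \<Rightarrow> 'a \<Rightarrow> real"
  assumes "second_countable X"
    and "\<And>R. R > 0 \<Longrightarrow> upper_semicontinuous_on_top X (f R)"
    and "\<And>R. R > 0 \<Longrightarrow> upper_semicontinuous_on_top X (g R)"
    and "\<And>R \<epsilon> z. R > 0 \<Longrightarrow> \<epsilon> > 0 \<Longrightarrow> z \<in> topspace X \<Longrightarrow>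
           f R z \<le> g R z \<and> g R z \<le> f (R + \<epsilon>) z"
  shows "countable {R. R > 0 \<and> (\<exists>z \<in> topspace X. f R z \<noteq> g R z)}"
proof -
  obtain B where B: "countable B"
    "\<And>U x. openin X U \<Longrightarrow> x \<in> U \<Longrightarrow> \<exists>V \<in> B. x \<in> V \<and> V \<subseteq> U"
    using assms(1) unfolding second_countable_def by metis
  show ?thesis
  proof (rule countable_if_ordered_witnesses)
    show "countable (B \<times> (UNIV :: rat set))"
      using B(1) by (simp add: countable_SIGMA)
    show "\<exists>p \<in> B \<times> UNIV. rat_gap_witness X B (f R) (g R) p"
      if "R \<in> {R. R > 0 \<and> (\<exists>z \<in> topspace X. f R z \<noteq> g R z)}" for R
    proof -
      from that obtain z where R: "R > 0" and z: "z \<in> topspace X" "f R z \<noteq> g R z"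
        by blast
      with assms(4)[of R 1 z] have "f R z < g R z" by simp
      then obtain p where "rat_gap_witness X B (f R) (g R) p"
        using rat_gap_witness_exists[OF B(2) assms(2)[OF R] z(1)] by blast
      then show ?thesis
        unfolding rat_gap_witness_def by (auto simp: mem_Times_iff)
    qed
    show False
      if "R \<in> {R. R > 0 \<and> (\<exists>z \<in> topspace X. f R z \<noteq> g R z)}" "R < R'"
        "rat_gap_witness X B (f R) (g R) p" "rat_gap_witness X B (f R') (g R') p" for R R' p
      using rat_gap_witness_not_shared[OF _ that(3,4)] assms(4)[of R "R' - R"] that(1,2) by auto
  qed
qed

end
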